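(* Let $\Sigma=(\sigma_0,\sigma_\infty,\sigma_1,\tau)$ be a special admissible 4-tuple in $S_{2n}^4$ such that $\sigma_1\tau$ is a product of $n-3$ disjoint transpositions and a disjoint 3-cycle. Then there exist integers $h,k$ with $1\le h\le n-2$, $h<k<2n-h$ and $h\equiv k\pmod 2$ such that $\sigma_0=\prod_{i=1}^{h}(i,2n+1-i)\prod_{j=1}^{(k-h)/2}(h+j,k+1-j)\prod_{t=1}^{(2n-h-k)/2}(k+t,2n-h+1-t)$ and $\sigma_1\tau=\prod_{i=1}^{h-1}(i,2n-i)\prod_{j=1}^{(k-h)/2-1}(h+j,k-j)\prod_{t=1}^{(2n-h-k)/2-1}(k+t,2n-h-t)\,\cdot(2n-h,\,h,\,k)$. In particular $\sigma_1\tau$ fixes exactly the three indices $2n$, $(k+h)/2$ and $(2n-h+k)/2$. Moreover, for each such $(h,k)$ there are exactly three special tuples with these $\sigma_0$ and $\sigma_1\tau$, corresponding to $\tau\in\{(h,k),(h,2n-h),(k,2n-h)\}$.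
   Context: Permutation products are read left to right ($\sigma\sigma'$: first $\sigma$, then $\sigma'$); $(a,b,c)$ denotes the cycle $a\mapsto b\mapsto c\mapsto a$. An admissible 4-tuple is $(\sigma_0,\sigma_\infty,\sigma_1,\tau)\in S_{2n}^4$ with $\sigma_0$ a product of $n$ disjoint transpositions, $\sigma_\infty$ a $2n$-cycle, $\sigma_1$ a product of $n-2$ disjoint transpositions, $\tau$ a transposition, and $\sigma_0\sigma_\infty\sigma_1\tau=\mathrm{id}$. It is special if $\sigma_\infty=(2n,2n-1,\dots,1)$ and $\sigma_1(2n)=\tau(2n)=2n$. *)

theory Defs
  imports "HOL-Combinatorics.Combinatorics"
begin

(* Permutations of {1..2n} are functions nat => nat that permute {1..2n}.
   Products are read left to right: lr_prod [p1,...,pm] = first p1, then p2, ...,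
   i.e. pm o ... o p1. *)
fun lr_prod :: "(nat \<Rightarrow> nat) list \<Rightarrow> nat \<Rightarrow> nat" where
  "lr_prod [] = id"
| "lr_prod (p # ps) = lr_prod ps \<circ> p"

definition pair_entries :: "(nat \<times> nat) list \<Rightarrow> nat list" where
  "pair_entries ps = concat (map (\<lambda>(a,b). [a,b]) ps)"

definition transps :: "(nat \<times> nat) list \<Rightarrow> (nat \<Rightarrow> nat) list" where
  "transps ps = map (\<lambda>(a,b). transpose a b) ps"

definition prod_disj_transp :: "nat set \<Rightarrow> nat \<Rightarrow> (nat \<Rightarrow> nat) \<Rightarrow> bool" where
  "prod_disj_transp S m \<sigma> \<longleftrightarrow>
     (\<exists>ps. length ps = m \<and> distinct (pair_entries ps) \<and> set (pair_entries ps) \<subseteq> S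
           \<and> \<sigma> = lr_prod (transps ps))"

definition prod_disj_transp_3cycle :: "nat set \<Rightarrow> nat \<Rightarrow> (nat \<Rightarrow> nat) \<Rightarrow> bool" where
  "prod_disj_transp_3cycle S m \<sigma> \<longleftrightarrow>
     (\<exists>ps a b c. length ps = m \<and> distinct (pair_entries ps @ [a,b,c])
           \<and> set (pair_entries ps @ [a,b,c]) \<subseteq> S
           \<and> \<sigma> = lr_prod (transps ps @ [cycle_of_list [a,b,c]]))"

definition full_cycle :: "nat set \<Rightarrow> (nat \<Rightarrow> nat) \<Rightarrow> bool" where
  "full_cycle S \<sigma> \<longleftrightarrow> (\<exists>xs. distinct xs \<and> set xs = S \<and> \<sigma> = cycle_of_list xs)"

definition is_transposition :: "nat set \<Rightarrow> (nat \<Rightarrow> nat) \<Rightarrow> bool" where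
  "is_transposition S \<tau> \<longleftrightarrow> (\<exists>a\<in>S. \<exists>b\<in>S. a \<noteq> b \<and> \<tau> = transpose a b)"

definition admissible :: "nat \<Rightarrow> (nat \<Rightarrow> nat) \<Rightarrow> (nat \<Rightarrow> nat) \<Rightarrow> (nat \<Rightarrow> nat) \<Rightarrow> (nat \<Rightarrow> nat) \<Rightarrow> bool" where
  "admissible n s0 sinf s1 t \<longleftrightarrow>
     prod_disj_transp {1..2*n} n s0 \<and> full_cycle {1..2*n} sinf \<and>
     prod_disj_transp {1..2*n} (n - 2) s1 \<and> is_transposition {1..2*n} t \<and>
     lr_prod [s0, sinf, s1, t] = id"

definition sigma_inf :: "nat \<Rightarrow> nat \<Rightarrow> nat" where
  "sigma_inf n = cycle_of_list (rev [1..<2*n+1])"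

definition special :: "nat \<Rightarrow> (nat \<Rightarrow> nat) \<Rightarrow> (nat \<Rightarrow> nat) \<Rightarrow> (nat \<Rightarrow> nat) \<Rightarrow> (nat \<Rightarrow> nat) \<Rightarrow> bool" where
  "special n s0 sinf s1 t \<longleftrightarrow>
     admissible n s0 sinf s1 t \<and> sinf = sigma_inf n \<and> s1 (2*n) = 2*n \<and> t (2*n) = 2*n"

definition sigma0_hk :: "nat \<Rightarrow> nat \<Rightarrow> nat \<Rightarrow> nat \<Rightarrow> nat" where
  "sigma0_hk n h k = lr_prod
     (map (\<lambda>i. transpose i (2*n+1-i)) [1..<h+1]
      @ map (\<lambda>j. transpose (h+j) (k+1-j)) [1..<(k-h) div 2 + 1]
      @ map (\<lambda>t. transpose (k+t) (2*n-h+1-t)) [1..<(2*n-h-k) div 2 + 1])"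

definition rho_hk :: "nat \<Rightarrow> nat \<Rightarrow> nat \<Rightarrow> nat \<Rightarrow> nat" where
  "rho_hk n h k = lr_prod
     (map (\<lambda>i. transpose i (2*n-i)) [1..<h]
      @ map (\<lambda>j. transpose (h+j) (k-j)) [1..<(k-h) div 2]
      @ map (\<lambda>t. transpose (k+t) (2*n-h-t)) [1..<(2*n-h-k) div 2]
      @ [cycle_of_list [2*n-h, h, k]])"

definition good_hk :: "nat \<Rightarrow> nat \<Rightarrow> nat \<Rightarrow> bool" where
  "good_hk n h k \<longleftrightarrow> 1 \<le> h \<and> h \<le> n - 2 \<and> h < k \<and> k < 2*n - h \<and> even (k - h)"

end

theory Submission
  imports Defs
begin

text \<open>
  Write \<open>\<rho> = \<sigma>\<^sub>1\<tau>\<close>. With the special \<open>\<sigma>\<^sub>\<infinity>\<close>, which maps \<open>x + 1\<close> to \<open>x\<close>, the relation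
  \<open>\<sigma>\<^sub>0\<sigma>\<^sub>\<infinity>\<rho> = id\<close> reads \<open>\<rho> x = \<sigma>\<^sub>0 (x + 1)\<close>. As \<open>\<rho>\<close> is an involution off its 3-cycle, this
  forces \<open>\<sigma>\<^sub>0 x + x\<close> to be constant along every stretch of consecutive points avoiding the
  cycle, so \<open>\<sigma>\<^sub>0\<close> is a reflection on each such block. Starting from \<open>\<sigma>\<^sub>0 1 = 2n\<close>, the
  least cycle point \<open>h\<close>, its image \<open>k = \<rho> h\<close> and \<open>\<rho> k = 2n - h\<close> cut \<open>{1..2n}\<close> into four
  reflected blocks; a reflection without fixed points needs blocks of even length, which is
  the parity condition. Conversely, \<open>\<sigma>\<^sub>1 = \<rho>\<tau>\<close> is an involution iff \<open>\<rho>\<tau>\<rho> = \<tau>\<close>, and a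
  transposition with this property must swap two points of the 3-cycle.
\<close>

lemma lr_prod_append: "lr_prod (xs @ ys) = lr_prod ys \<circ> lr_prod xs"
  by (induction xs) auto

lemma pair_entries_simps [simp]:
  "pair_entries [] = []"
  "pair_entries ((a, b) # ps) = a # b # pair_entries ps"
  "pair_entries (ps @ qs) = pair_entries ps @ pair_entries qs"
  by (auto simp: pair_entries_def)

lemma transps_simps [simp]:
  "transps [] = []"
  "transps ((a, b) # ps) = transpose a b # transps ps"
  "transps (ps @ qs) = transps ps @ transps qs"
  by (auto simp: transps_def)

lemma set_pair_entries: "set (pair_entries ps) = fst ` set ps \<union> snd ` set ps"
  by (induction ps) force+

lemma length_pair_entries [simp]: "length (pair_entries ps) = 2 * length ps"
  by (induction ps) auto

lemma distinct_pair_entries_iff: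
  "distinct (pair_entries ps) \<longleftrightarrow> distinct (map fst ps @ map snd ps)"
  by (induction ps) (fastforce simp: set_pair_entries)+

lemma lr_prod_transps_outside:
  "x \<notin> set (pair_entries ps) \<Longrightarrow> lr_prod (transps ps) x = x"
proof (induction ps)
  case (Cons p ps)
  then show ?case by (cases p) (auto simp: transpose_def)
qed simp

lemma lr_prod_transps_swaps:
  assumes "distinct (pair_entries ps)" and "(a, b) \<in> set ps"
  shows "lr_prod (transps ps) a = b \<and> lr_prod (transps ps) b = a"
  using assms
proof (induction ps)
  case (Cons p ps)
  obtain c d where p: "p = (c, d)" by fastforce
  show ?case
  proof (cases "(a, b) = (c, d)")
    case True
    then show ?thesis using Cons.prems p by (auto simp: lr_prod_transps_outside)
  next
    case False
    then have ab: "(a, b) \<in> set ps" using Cons.prems p by auto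
    then have "a \<in> set (pair_entries ps)" "b \<in> set (pair_entries ps)"
      by (force simp: set_pair_entries)+
    then have "a \<notin> {c, d}" "b \<notin> {c, d}" using Cons.prems p by auto
    then show ?thesis using Cons ab p by (auto simp: transpose_def)
  qed
qed simp

lemma lr_prod_transps_eqI:
  assumes "distinct (pair_entries ps)"
    and "\<And>a b. (a, b) \<in> set ps \<Longrightarrow> f a = b \<and> f b = a"
    and "\<And>x. x \<notin> set (pair_entries ps) \<Longrightarrow> f x = x"
  shows "lr_prod (transps ps) = f"
proof
  fix x
  show "lr_prod (transps ps) x = f x"
  proof (cases "x \<in> set (pair_entries ps)")
    case True
    then obtain a b where "(a, b) \<in> set ps" "x = a \<or> x = b"
      by (force simp: set_pair_entries)
    then show ?thesis using lr_prod_transps_swaps[OF assms(1)] assms(2) by metis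
  next
    case False
    then show ?thesis using lr_prod_transps_outside assms(3) by simp
  qed
qed

lemma lr_prod_transps_involution:
  assumes "distinct (pair_entries ps)"
  shows "lr_prod (transps ps) (lr_prod (transps ps) x) = x"
proof (cases "x \<in> set (pair_entries ps)")
  case True
  then obtain a b where "(a, b) \<in> set ps" "x = a \<or> x = b"
    by (force simp: set_pair_entries)
  then show ?thesis using lr_prod_transps_swaps[OF assms] by metis
qed (simp add: lr_prod_transps_outside)

lemma lr_prod_transps_moves:
  assumes "distinct (pair_entries ps)" and "x \<in> set (pair_entries ps)"
  shows "lr_prod (transps ps) x \<in> set (pair_entries ps) \<and> lr_prod (transps ps) x \<noteq> x"
proof -
  obtain a b where ab: "(a, b) \<in> set ps" "x = a \<or> x = b"
    using assms(2) by (force simp: set_pair_entries)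
  have "a \<noteq> b" using assms(1) ab(1) by (induction ps) (auto simp: set_pair_entries)
  moreover have "a \<in> set (pair_entries ps)" "b \<in> set (pair_entries ps)"
    using ab(1) by (force simp: set_pair_entries)+
  ultimately show ?thesis using lr_prod_transps_swaps[OF assms(1) ab(1)] ab(2) by auto
qed

lemma prod_disj_transp_involution:
  "prod_disj_transp S m \<sigma> \<Longrightarrow> \<sigma> (\<sigma> x) = x"
  unfolding prod_disj_transp_def using lr_prod_transps_involution by blast

lemma distinct_pair_entries_set_eq:
  assumes "distinct (pair_entries ps)" and "set (pair_entries ps) \<subseteq> S"
    and "finite S" and "card S = 2 * length ps"
  shows "set (pair_entries ps) = S"
  using card_subset_eq[OF assms(3,2)] distinct_card[OF assms(1)] assms(4) by simp

lemma set_pair_entries_subsetI: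
  "(\<And>a b. (a, b) \<in> set ps \<Longrightarrow> a \<in> S \<and> b \<in> S) \<Longrightarrow> set (pair_entries ps) \<subseteq> S"
  by (force simp: set_pair_entries)

lemma prod_disj_transp_fixed_point_free:
  assumes "prod_disj_transp S m \<sigma>" and "finite S" and "card S = 2 * m"
  shows "x \<in> S \<Longrightarrow> \<sigma> x \<in> S \<and> \<sigma> x \<noteq> x"
    and "x \<notin> S \<Longrightarrow> \<sigma> x = x"
proof -
  obtain ps where ps: "length ps = m" "distinct (pair_entries ps)"
    "set (pair_entries ps) \<subseteq> S" "\<sigma> = lr_prod (transps ps)"
    using assms(1) unfolding prod_disj_transp_def by blast
  have "set (pair_entries ps) = S"
    using distinct_pair_entries_set_eq[OF ps(2,3) assms(2)] ps(1) assms(3) by simp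
  then show "x \<in> S \<Longrightarrow> \<sigma> x \<in> S \<and> \<sigma> x \<noteq> x" and "x \<notin> S \<Longrightarrow> \<sigma> x = x"
    using lr_prod_transps_moves[OF ps(2)] lr_prod_transps_outside ps(4) by auto
qed

lemma cycle_of_list_three:
  "distinct [a, b, c] \<Longrightarrow>
   cycle_of_list [a, b, c] x = (if x = a then b else if x = b then c else if x = c then a else x)"
  by (auto simp: transpose_def)

lemma prod_disj_transp_3cycle_elim:
  assumes "prod_disj_transp_3cycle S m \<rho>"
  obtains a b c where "distinct [a, b, c]" "{a, b, c} \<subseteq> S"
    "\<rho> a = b" "\<rho> b = c" "\<rho> c = a" "\<And>x. x \<notin> {a, b, c} \<Longrightarrow> \<rho> (\<rho> x) = x"
proof -
  obtain ps a b c where ps: "distinct (pair_entries ps @ [a, b, c])"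
    "set (pair_entries ps @ [a, b, c]) \<subseteq> S"
    "\<rho> = lr_prod (transps ps @ [cycle_of_list [a, b, c]])"
    using assms unfolding prod_disj_transp_3cycle_def by blast
  define \<pi> where "\<pi> = lr_prod (transps ps)"
  have dps: "distinct (pair_entries ps)" and abc: "distinct [a, b, c]"
    and out: "\<And>x. x \<in> {a, b, c} \<Longrightarrow> x \<notin> set (pair_entries ps)"
    using ps(1) by auto
  have \<rho>: "\<rho> x = cycle_of_list [a, b, c] (\<pi> x)" for x
    using ps(3) unfolding \<pi>_def by (simp add: lr_prod_append)
  have \<pi>_abc: "\<pi> x = x" if "x \<in> {a, b, c}" for x
    unfolding \<pi>_def using lr_prod_transps_outside out[OF that] .
  have "\<rho> (\<rho> x) = x" if x: "x \<notin> {a, b, c}" for x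
  proof (cases "x \<in> set (pair_entries ps)")
    case True
    then have "\<pi> x \<in> set (pair_entries ps)" "\<pi> (\<pi> x) = x"
      using lr_prod_transps_moves[OF dps] lr_prod_transps_involution[OF dps] unfolding \<pi>_def
      by blast+
    then show ?thesis using \<rho> out x cycle_of_list_three[OF abc] by auto
  next
    case False
    then show ?thesis using \<rho> x cycle_of_list_three[OF abc] lr_prod_transps_outside
      unfolding \<pi>_def by auto
  qed
  moreover have "\<rho> a = b" "\<rho> b = c" "\<rho> c = a"
    using \<rho> \<pi>_abc cycle_of_list_three[OF abc] abc by auto
  ultimately show ?thesis using that abc ps(2) by auto
qed

lemma cycle_of_list_nth:
  assumes "distinct cs" and "i < length cs"
  shows "cycle_of_list cs (cs ! i) = cs ! (Suc i mod length cs)"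
proof -
  have "map (cycle_of_list cs) cs = rotate1 cs"
    using cyclic_rotation[OF assms(1), of 1] by simp
  then have "map (cycle_of_list cs) cs ! i = rotate1 cs ! i" by simp
  then show ?thesis using assms by (simp add: nth_rotate1)
qed

lemma sigma_inf_in:
  assumes "1 \<le> y" and "y \<le> 2 * n"
  shows "sigma_inf n y = (if y = 1 then 2 * n else y - 1)"
proof -
  let ?cs = "rev [1..<2 * n + 1]"
  have "distinct ?cs" and "length ?cs = 2 * n" by simp_all
  moreover have "?cs ! (2 * n - y) = y"
    using assms by (subst rev_nth) (auto simp del: upt_Suc)
  ultimately have "sigma_inf n y = ?cs ! (Suc (2 * n - y) mod (2 * n))"
    using cycle_of_list_nth[of ?cs "2 * n - y"] assms unfolding sigma_inf_def by simp
  also have "\<dots> = (if y = 1 then 2 * n else y - 1)"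
    using assms by (cases "y = 1") (auto simp: rev_nth simp del: upt_Suc)
  finally show ?thesis .
qed

lemma sigma_inf_out: "y \<notin> {1..2 * n} \<Longrightarrow> sigma_inf n y = y"
  unfolding sigma_inf_def by (rule id_outside_supp) auto

lemma surj_sigma_inf: "surj (sigma_inf n)"
  unfolding sigma_inf_def by (rule permutes_surj[OF cycle_permutes])

lemma full_cycle_sigma_inf: "full_cycle {1..2 * n} (sigma_inf n)"
  unfolding full_cycle_def sigma_inf_def by (intro exI[of _ "rev [1..<2 * n + 1]"]) auto

definition sigma0_explicit :: "nat \<Rightarrow> nat \<Rightarrow> nat \<Rightarrow> nat \<Rightarrow> nat" where
  "sigma0_explicit n h k x =
     (if x \<in> {1..2 * n} then
        (if x \<le> h then 2 * n + 1 - x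
         else if x \<le> k then h + k + 1 - x
         else if x \<le> 2 * n - h then 2 * n - h + k + 1 - x
         else 2 * n + 1 - x)
      else x)"

text \<open>\<open>\<sigma>\<close> stands for \<open>\<sigma>\<^sub>0\<close> and \<open>\<rho>\<close> for \<open>\<sigma>\<^sub>1\<tau>\<close>; the assumptions are what a special tuple
  with a 3-cycle \<open>\<sigma>\<^sub>1\<tau>\<close> provides (lemma \<open>special_shifted_matching\<close>).\<close>

locale shifted_matching =
  fixes n :: nat and \<sigma> \<rho> :: "nat \<Rightarrow> nat" and a b c :: nat
  assumes matching: "\<And>x. x \<in> {1..2 * n} \<Longrightarrow> \<sigma> x \<in> {1..2 * n} \<and> \<sigma> x \<noteq> x \<and> \<sigma> (\<sigma> x) = x"
    and rho_shift: "\<And>x. 1 \<le> x \<Longrightarrow> x < 2 * n \<Longrightarrow> \<rho> x = \<sigma> (Suc x)"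
    and rho_top: "\<rho> (2 * n) = 2 * n"
    and sigma_one: "\<sigma> 1 = 2 * n"
    and three_cycle: "distinct [a, b, c]" "{a, b, c} \<subseteq> {1..2 * n}"
      "\<rho> a = b" "\<rho> b = c" "\<rho> c = a"
    and rho_involution: "\<And>x. x \<notin> {a, b, c} \<Longrightarrow> \<rho> (\<rho> x) = x"
begin

lemma on_cycle:
  assumes "x \<in> {a, b, c}"
  shows "\<rho> x \<in> {a, b, c}" "\<rho> x \<noteq> x" "\<rho> (\<rho> x) \<noteq> x" "\<rho> (\<rho> (\<rho> x)) = x"
    "{a, b, c} = {x, \<rho> x, \<rho> (\<rho> x)}"
  using assms three_cycle by auto

lemma cycle_point_bounds:
  assumes "x \<in> {a, b, c}"
  shows "x \<in> {1..<2 * n}"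
proof -
  have "x \<noteq> 2 * n" using on_cycle(2)[OF assms] rho_top by auto
  then show ?thesis using assms three_cycle(2) by auto
qed

lemma sigma_sum_step:
  assumes "1 \<le> u" "u < 2 * n" "u \<notin> {a, b, c}"
  shows "\<sigma> (Suc u) + Suc u = \<sigma> u + u"
proof -
  define w where "w = \<sigma> (Suc u)"
  have w: "w \<in> {1..2 * n}" using matching[of "Suc u"] assms unfolding w_def by auto
  have "\<rho> w = u" using rho_involution[OF assms(3)] rho_shift[OF assms(1,2)] unfolding w_def by simp
  then have "w \<noteq> 2 * n" using rho_top assms(2) by auto
  then have "\<sigma> (Suc w) = u" using rho_shift[of w] w \<open>\<rho> w = u\<close> by auto
  then have "\<sigma> u = Suc w" using matching[of "Suc w"] w \<open>w \<noteq> 2 * n\<close> by auto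
  then show ?thesis unfolding w_def by simp
qed

lemma sigma_sum_const:
  assumes "1 \<le> u" "u \<le> x" "x \<le> 2 * n" "\<forall>y. u \<le> y \<and> y < x \<longrightarrow> y \<notin> {a, b, c}"
  shows "\<sigma> x + x = \<sigma> u + u"
  using assms(2-4)
proof (induction x rule: dec_induct)
  case (step m)
  then show ?case using sigma_sum_step[of m] assms(1) by auto
qed simp

lemma reflected_segment_odd:
  assumes "\<sigma> u = v" "1 \<le> u" "u \<le> v" "v \<le> 2 * n" "\<forall>y. u \<le> y \<and> y < v \<longrightarrow> y \<notin> {a, b, c}"
  shows "odd (v - u)"
proof
  assume "even (v - u)"
  then have mid: "u + v = 2 * ((u + v) div 2)" using assms(3) by auto
  define x where "x = (u + v) div 2"
  have "u \<le> x" "x \<le> v" unfolding x_def using assms(3) by auto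
  then have "\<sigma> x + x = u + v" using sigma_sum_const[of u x] assms by auto
  then have "\<sigma> x = x" using mid unfolding x_def by linarith
  moreover have "x \<in> {1..2 * n}" using assms \<open>u \<le> x\<close> \<open>x \<le> v\<close> by auto
  ultimately show False using matching by blast
qed

context
  fixes h :: nat
  assumes h_in: "h \<in> {a, b, c}" and h_min: "\<And>x. x \<in> {a, b, c} \<Longrightarrow> h \<le> x"
begin

lemma sigma_below_min: "1 \<le> x \<Longrightarrow> x \<le> h \<Longrightarrow> \<sigma> x = 2 * n + 1 - x"
  using sigma_sum_const[of 1 x] sigma_one h_min cycle_point_bounds[OF h_in] by fastforce

lemma sigma_mirror_below_min: "1 \<le> x \<Longrightarrow> x \<le> h \<Longrightarrow> \<sigma> (2 * n + 1 - x) = x"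
  using sigma_below_min matching[of x] cycle_point_bounds[OF h_in] by force

lemma min_lt_mirror: "h < 2 * n - h"
proof (rule ccontr)
  assume "\<not> h < 2 * n - h"
  then have "\<sigma> (Suc h) = 2 * n - h"
    using sigma_mirror_below_min[of "2 * n - h"] cycle_point_bounds[OF h_in] by auto
  then have "\<rho> h = 2 * n - h" using rho_shift cycle_point_bounds[OF h_in] by auto
  then show False
    using h_min[of "\<rho> h"] on_cycle(1,2)[OF h_in] \<open>\<not> h < 2 * n - h\<close> by auto
qed

lemma rho_mirror: "\<rho> (2 * n - h) = h"
  using rho_shift[of "2 * n - h"] sigma_mirror_below_min[of h] min_lt_mirror cycle_point_bounds[OF h_in]
  by (auto simp: Suc_diff_le)

lemma mirror_on_cycle: "2 * n - h \<in> {a, b, c}"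
proof (rule ccontr)
  assume "2 * n - h \<notin> {a, b, c}"
  then have "\<rho> h = 2 * n - h" using rho_involution rho_mirror by metis
  then show False using rho_mirror on_cycle(3)[OF h_in] by simp
qed

lemma rho_rho_min: "\<rho> (\<rho> h) = 2 * n - h"
  using on_cycle(4)[OF mirror_on_cycle] rho_mirror by simp

lemma min_lt_rho: "h < \<rho> h"
  using h_min[of "\<rho> h"] on_cycle(1,2)[OF h_in] by force

lemma rho_lt_mirror: "\<rho> h < 2 * n - h"
proof (rule ccontr)
  assume "\<not> \<rho> h < 2 * n - h"
  then have "2 * n - h < \<rho> h" using rho_rho_min on_cycle(2)[OF on_cycle(1)[OF h_in]] by fastforce
  define x where "x = 2 * n + 1 - \<rho> h"
  have x: "1 \<le> x" "x \<le> h" "\<rho> h = 2 * n + 1 - x"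
    using \<open>2 * n - h < \<rho> h\<close> cycle_point_bounds[OF on_cycle(1)[OF h_in]] unfolding x_def by auto
  have "\<sigma> (\<rho> h) = Suc h"
    using rho_shift[of h] matching[of "Suc h"] cycle_point_bounds[OF h_in] min_lt_mirror by auto
  then show False using sigma_mirror_below_min[OF x(1,2)] x by simp
qed

lemma cycle_eq: "{a, b, c} = {h, \<rho> h, 2 * n - h}"
  using on_cycle(5)[OF h_in] rho_rho_min by simp

lemma sigma_after_min: "\<sigma> (Suc h) = \<rho> h"
  using rho_shift cycle_point_bounds[OF h_in] by simp

lemma sigma_after_rho_min: "\<sigma> (Suc (\<rho> h)) = 2 * n - h"
  using rho_shift cycle_point_bounds[OF on_cycle(1)[OF h_in]] rho_rho_min by simp

lemma sigma_sum_blocks: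
  assumes "x \<in> {1..2 * n}"
  shows "\<sigma> x + x = (if x \<le> h then 2 * n + 1 else if x \<le> \<rho> h then h + \<rho> h + 1
                     else if x \<le> 2 * n - h then 2 * n - h + \<rho> h + 1 else 2 * n + 1)"
proof -
  have mh: "\<sigma> (Suc (2 * n - h)) = h" if "2 * n - h < 2 * n"
    using rho_shift[of "2 * n - h"] rho_mirror that min_lt_mirror by simp
  consider "x \<le> h" | "h < x" "x \<le> \<rho> h" | "\<rho> h < x" "x \<le> 2 * n - h" | "2 * n - h < x"
    by linarith
  then show ?thesis
  proof cases
    case 1
    then show ?thesis using sigma_below_min assms by auto
  next
    case 2
    then show ?thesis
      using sigma_sum_const[of "Suc h" x] sigma_after_min assms cycle_eq min_lt_rho rho_lt_mirror
      by auto
  next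
    case 3
    then show ?thesis
      using sigma_sum_const[of "Suc (\<rho> h)" x] sigma_after_rho_min assms cycle_eq min_lt_rho
        rho_lt_mirror
      by auto
  next
    case 4
    then show ?thesis
      using sigma_sum_const[of "Suc (2 * n - h)" x] mh assms cycle_eq min_lt_rho rho_lt_mirror
      by auto
  qed
qed

lemma block_lengths_even: "even (\<rho> h - h)" "even (2 * n - h - \<rho> h)"
proof -
  have "odd (\<rho> h - Suc h)"
    by (rule reflected_segment_odd[OF sigma_after_min])
      (use cycle_eq min_lt_rho rho_lt_mirror in auto)
  moreover have "odd (2 * n - h - Suc (\<rho> h))"
    by (rule reflected_segment_odd[OF sigma_after_rho_min])
      (use cycle_eq min_lt_rho rho_lt_mirror in auto)
  ultimately show "even (\<rho> h - h)" "even (2 * n - h - \<rho> h)"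
    using min_lt_rho rho_lt_mirror by auto
qed

end

lemma exists_good_hk: "\<exists>h k. good_hk n h k \<and> (\<forall>x\<in>{1..2 * n}. \<sigma> x = sigma0_explicit n h k x)"
proof (intro exI conjI ballI)
  define h where "h = Min {a, b, c}"
  have h_in: "h \<in> {a, b, c}" and h_min: "\<And>x. x \<in> {a, b, c} \<Longrightarrow> h \<le> x"
    unfolding h_def by auto
  note bounds = min_lt_rho[OF h_in h_min] rho_lt_mirror[OF h_in h_min] cycle_point_bounds[OF h_in]
  obtain i where i: "\<rho> h - h = 2 * i"
    using block_lengths_even(1)[OF h_in h_min] by (rule evenE)
  obtain j where j: "2 * n - h - \<rho> h = 2 * j"
    using block_lengths_even(2)[OF h_in h_min] by (rule evenE)
  have "\<rho> h = h + 2 * i" "2 * n = h + \<rho> h + 2 * j" "0 < i" "0 < j"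
    using i j bounds by linarith+
  then have "h \<le> n - 2" by linarith
  then show "good_hk n h (\<rho> h)"
    unfolding good_hk_def using bounds i by auto
  show "\<sigma> x = sigma0_explicit n h (\<rho> h) x" if "x \<in> {1..2 * n}" for x
    using sigma_sum_blocks[OF h_in h_min that] that bounds unfolding sigma0_explicit_def by auto
qed

end

definition rho_explicit :: "nat \<Rightarrow> nat \<Rightarrow> nat \<Rightarrow> nat \<Rightarrow> nat" where
  "rho_explicit n h k x =
     (if x \<in> {1..<2 * n} then
        (if x < h then 2 * n - x
         else if x = h then k
         else if x < k then h + k - x
         else if x = k then 2 * n - h
         else if x < 2 * n - h then 2 * n - h + k - x
         else if x = 2 * n - h then h
         else 2 * n - x)
      else x)"

definition sigma0_pairs :: "nat \<Rightarrow> nat \<Rightarrow> nat \<Rightarrow> (nat \<times> nat) list" where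
  "sigma0_pairs n h k =
     map (\<lambda>i. (i, 2 * n + 1 - i)) [1..<h + 1]
     @ map (\<lambda>j. (h + j, k + 1 - j)) [1..<(k - h) div 2 + 1]
     @ map (\<lambda>t. (k + t, 2 * n - h + 1 - t)) [1..<(2 * n - h - k) div 2 + 1]"

definition rho_pairs :: "nat \<Rightarrow> nat \<Rightarrow> nat \<Rightarrow> (nat \<times> nat) list" where
  "rho_pairs n h k =
     map (\<lambda>i. (i, 2 * n - i)) [1..<h]
     @ map (\<lambda>j. (h + j, k - j)) [1..<(k - h) div 2]
     @ map (\<lambda>t. (k + t, 2 * n - h - t)) [1..<(2 * n - h - k) div 2]"

lemma sigma0_hk_eq_pairs: "sigma0_hk n h k = lr_prod (transps (sigma0_pairs n h k))"
  unfolding sigma0_hk_def sigma0_pairs_def transps_def by (simp add: comp_def del: upt_Suc)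

lemma rho_hk_eq_pairs:
  "rho_hk n h k = cycle_of_list [2 * n - h, h, k] \<circ> lr_prod (transps (rho_pairs n h k))"
  unfolding rho_hk_def rho_pairs_def transps_def
  by (simp add: lr_prod_append comp_def del: upt_Suc)

text \<open>\<open>p\<close> and \<open>q\<close> are the half-lengths \<open>(k - h) / 2\<close> and \<open>(2n - h - k) / 2\<close> of the two middle
  blocks; this replaces the parity condition of \<open>good_hk\<close>.\<close>

locale hk_params =
  fixes n h k p q :: nat
  assumes k_eq: "k = h + 2 * p" and n_eq: "n = h + p + q"
    and h_pos: "1 \<le> h" and p_pos: "1 \<le> p" and q_pos: "1 \<le> q"
begin

lemma half_gaps: "(k - h) div 2 = p" "(2 * n - h - k) div 2 = q"
  using k_eq n_eq by auto

lemma block_bounds: "1 \<le> h" "h < h + p" "h + p < k" "k < k + q" "k + q < 2 * n - h" "2 * n - h < 2 * n"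
  using k_eq n_eq h_pos p_pos q_pos by auto

lemma cycle_distinct: "distinct [2 * n - h, h, k]"
  using block_bounds by auto

lemma block_sums: "h + p + p = k" "k + q + q + h = 2 * n"
  using k_eq n_eq by auto

lemma block_cases:
  obtains "x < 1" | "1 \<le> x" "x < h" | "x = h" | "h < x" "x < k" | "x = k"
    | "k < x" "x < 2 * n - h" | "x = 2 * n - h" | "2 * n - h < x" "x < 2 * n" | "2 * n \<le> x"
  using block_bounds by linarith

lemma sigma0_explicit_blocks:
  "1 \<le> x \<Longrightarrow> x \<le> h \<Longrightarrow> sigma0_explicit n h k x = 2 * n + 1 - x"
  "h < x \<Longrightarrow> x \<le> k \<Longrightarrow> sigma0_explicit n h k x = h + k + 1 - x"
  "k < x \<Longrightarrow> x \<le> 2 * n - h \<Longrightarrow> sigma0_explicit n h k x = 2 * n - h + k + 1 - x"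
  "2 * n - h < x \<Longrightarrow> x \<le> 2 * n \<Longrightarrow> sigma0_explicit n h k x = 2 * n + 1 - x"
  "x \<notin> {1..2 * n} \<Longrightarrow> sigma0_explicit n h k x = x"
  unfolding sigma0_explicit_def using block_bounds by auto

lemma rho_explicit_blocks:
  "1 \<le> x \<Longrightarrow> x < h \<Longrightarrow> rho_explicit n h k x = 2 * n - x"
  "rho_explicit n h k h = k"
  "h < x \<Longrightarrow> x < k \<Longrightarrow> rho_explicit n h k x = h + k - x"
  "rho_explicit n h k k = 2 * n - h"
  "k < x \<Longrightarrow> x < 2 * n - h \<Longrightarrow> rho_explicit n h k x = 2 * n - h + k - x"
  "rho_explicit n h k (2 * n - h) = h"
  "2 * n - h < x \<Longrightarrow> x < 2 * n \<Longrightarrow> rho_explicit n h k x = 2 * n - x"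
  "x \<notin> {1..<2 * n} \<Longrightarrow> rho_explicit n h k x = x"
  unfolding rho_explicit_def using block_bounds by auto

lemma sigma0_pairs_cases:
  "(a, b) \<in> set (sigma0_pairs n h k) \<Longrightarrow>
     (1 \<le> a \<and> a \<le> h \<and> b = 2 * n + 1 - a) \<or> (h < a \<and> a \<le> h + p \<and> b = h + k + 1 - a)
     \<or> (k < a \<and> a \<le> k + q \<and> b = 2 * n - h + k + 1 - a)"
  unfolding sigma0_pairs_def half_gaps using k_eq by (auto simp del: upt_Suc)

lemma rho_pairs_cases:
  "(a, b) \<in> set (rho_pairs n h k) \<Longrightarrow>
     (1 \<le> a \<and> a < h \<and> b = 2 * n - a) \<or> (h < a \<and> a < h + p \<and> b = h + k - a)
     \<or> (k < a \<and> a < k + q \<and> b = 2 * n - h + k - a)"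
  unfolding rho_pairs_def half_gaps using k_eq by (auto simp del: upt_Suc)

lemma distinct_sigma0_pairs: "distinct (pair_entries (sigma0_pairs n h k))"
  unfolding distinct_pair_entries_iff sigma0_pairs_def half_gaps
  using k_eq n_eq h_pos p_pos q_pos
  by (auto simp: inj_on_def distinct_map comp_def simp del: upt_Suc)

lemma length_sigma0_pairs: "length (sigma0_pairs n h k) = n"
  unfolding sigma0_pairs_def half_gaps using n_eq by simp

lemma set_sigma0_pairs: "set (pair_entries (sigma0_pairs n h k)) = {1..2 * n}"
proof (rule distinct_pair_entries_set_eq[OF distinct_sigma0_pairs])
  show "set (pair_entries (sigma0_pairs n h k)) \<subseteq> {1..2 * n}"
    by (rule set_pair_entries_subsetI, drule sigma0_pairs_cases) (use block_bounds in auto)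
qed (simp_all add: length_sigma0_pairs)

lemma prod_disj_transp_sigma0_hk: "prod_disj_transp {1..2 * n} n (sigma0_hk n h k)"
  unfolding prod_disj_transp_def sigma0_hk_eq_pairs
  using distinct_sigma0_pairs set_sigma0_pairs length_sigma0_pairs by blast

lemma sigma0_hk_explicit: "sigma0_hk n h k = sigma0_explicit n h k"
  unfolding sigma0_hk_eq_pairs
proof (rule lr_prod_transps_eqI[OF distinct_sigma0_pairs])
  fix a b assume "(a, b) \<in> set (sigma0_pairs n h k)"
  from sigma0_pairs_cases[OF this]
  show "sigma0_explicit n h k a = b \<and> sigma0_explicit n h k b = a"
    using block_bounds by (auto simp: sigma0_explicit_blocks)
next
  fix x assume "x \<notin> set (pair_entries (sigma0_pairs n h k))"
  then show "sigma0_explicit n h k x = x"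
    unfolding set_sigma0_pairs by (simp add: sigma0_explicit_blocks)
qed

lemma distinct_rho_pairs: "distinct (pair_entries (rho_pairs n h k))"
  unfolding distinct_pair_entries_iff rho_pairs_def half_gaps
  using k_eq n_eq h_pos p_pos q_pos
  by (auto simp: inj_on_def distinct_map comp_def simp del: upt_Suc)

lemma length_rho_pairs: "length (rho_pairs n h k) = n - 3"
  unfolding rho_pairs_def half_gaps using n_eq h_pos p_pos q_pos by simp

lemma set_rho_pairs:
  "set (pair_entries (rho_pairs n h k)) = {1..2 * n} - {2 * n, h, k, 2 * n - h, h + p, k + q}"
proof (rule distinct_pair_entries_set_eq[OF distinct_rho_pairs])
  show "set (pair_entries (rho_pairs n h k)) \<subseteq> {1..2 * n} - {2 * n, h, k, 2 * n - h, h + p, k + q}"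
    by (rule set_pair_entries_subsetI, drule rho_pairs_cases) (use block_bounds k_eq n_eq in auto)
  have "distinct [2 * n, h, k, 2 * n - h, h + p, k + q]" using block_bounds by auto
  then have "card {2 * n, h, k, 2 * n - h, h + p, k + q} = 6"
    using distinct_card by fastforce
  then show "card ({1..2 * n} - {2 * n, h, k, 2 * n - h, h + p, k + q})
      = 2 * length (rho_pairs n h k)"
    using block_bounds length_rho_pairs n_eq by (subst card_Diff_subset) auto
qed simp

lemma rho_explicit_fixed_iff:
  "x \<in> {1..2 * n} \<Longrightarrow> rho_explicit n h k x = x \<longleftrightarrow> x \<in> {2 * n, h + p, k + q}"
  by (rule block_cases[of x]) (use block_bounds block_sums in \<open>auto simp: rho_explicit_blocks\<close>)

lemma rho_explicit_off_cycle:
  "x \<notin> {h, k, 2 * n - h} \<Longrightarrow>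
     rho_explicit n h k (rho_explicit n h k x) = x \<and> rho_explicit n h k x \<notin> {h, k, 2 * n - h}"
  by (rule block_cases[of x]) (use block_bounds in \<open>auto simp: rho_explicit_blocks\<close>)

lemma rho_hk_explicit: "rho_hk n h k = rho_explicit n h k"
proof
  define g where "g x = (if x \<in> {h, k, 2 * n - h} then x else rho_explicit n h k x)" for x
  have "lr_prod (transps (rho_pairs n h k)) = g"
  proof (rule lr_prod_transps_eqI[OF distinct_rho_pairs])
    fix a b assume "(a, b) \<in> set (rho_pairs n h k)"
    from rho_pairs_cases[OF this] have "a \<notin> {h, k, 2 * n - h}" "rho_explicit n h k a = b"
      using block_bounds by (auto simp: rho_explicit_blocks)
    then show "g a = b \<and> g b = a" using rho_explicit_off_cycle unfolding g_def by auto
  next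
    fix x assume "x \<notin> set (pair_entries (rho_pairs n h k))"
    then show "g x = x"
      unfolding set_rho_pairs g_def using rho_explicit_fixed_iff[of x] block_bounds
      by (auto simp: rho_explicit_blocks)
  qed
  then have rho_g: "rho_hk n h k x =
      (if g x = 2 * n - h then h else if g x = h then k else if g x = k then 2 * n - h else g x)" for x
    using cycle_distinct unfolding rho_hk_eq_pairs by (simp add: cycle_of_list_three)
  fix x
  show "rho_hk n h k x = rho_explicit n h k x"
  proof (cases "x \<in> {h, k, 2 * n - h}")
    case True
    then show ?thesis unfolding rho_g g_def using block_bounds by (auto simp: rho_explicit_blocks)
  next
    case False
    then show ?thesis unfolding rho_g g_def using rho_explicit_off_cycle[OF False] by auto
  qed
qed

lemma rho_explicit_shift:
  "1 \<le> x \<Longrightarrow> x < 2 * n \<Longrightarrow> rho_explicit n h k x = sigma0_explicit n h k (Suc x)"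
  by (rule block_cases[of x]) (use block_bounds in \<open>simp_all add: rho_explicit_blocks sigma0_explicit_blocks\<close>)

lemma rho_hk_sigma_inf: "rho_hk n h k (sigma_inf n z) = sigma0_hk n h k z"
  unfolding rho_hk_explicit sigma0_hk_explicit
proof (cases "z \<in> {1..2 * n}")
  case True
  then show "rho_explicit n h k (sigma_inf n z) = sigma0_explicit n h k z"
    using rho_explicit_shift[of "z - 1"] sigma_inf_in[of z n] block_bounds
    by (cases "z = 1") (auto simp: rho_explicit_blocks sigma0_explicit_blocks)
next
  case False
  then show "rho_explicit n h k (sigma_inf n z) = sigma0_explicit n h k z"
    by (auto simp: sigma_inf_out rho_explicit_blocks sigma0_explicit_blocks)
qed

lemma rho_hk_fixed_points:
  "{x \<in> {1..2 * n}. rho_hk n h k x = x} = {2 * n, (k + h) div 2, (2 * n - h + k) div 2}"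
proof -
  have mid: "(k + h) div 2 = h + p" "(2 * n - h + k) div 2 = k + q" using k_eq n_eq by auto
  show ?thesis unfolding rho_hk_explicit mid using rho_explicit_fixed_iff block_bounds by auto
qed

lemma rho_hk_top: "rho_hk n h k (2 * n) = 2 * n"
  unfolding rho_hk_explicit by (simp add: rho_explicit_blocks)

lemma rho_hk_on_cycle:
  "rho_hk n h k h = k" "rho_hk n h k k = 2 * n - h" "rho_hk n h k (2 * n - h) = h"
  unfolding rho_hk_explicit by (simp_all add: rho_explicit_blocks)

abbreviation cycle_transpositions :: "(nat \<Rightarrow> nat) set" where
  "cycle_transpositions \<equiv> {transpose h k, transpose h (2 * n - h), transpose k (2 * n - h)}"

lemma cycle_transposition_comp_cycle:
  assumes "t \<in> cycle_transpositions"
  obtains e1 e2 where "e1 \<noteq> e2" "{e1, e2} \<subseteq> {h, k, 2 * n - h}"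
    "t \<circ> cycle_of_list [2 * n - h, h, k] = transpose e1 e2"
proof -
  note d = cycle_distinct
  have cyc: "cycle_of_list [2 * n - h, h, k] =
      (\<lambda>y. if y = 2 * n - h then h else if y = h then k else if y = k then 2 * n - h else y)"
    using cycle_of_list_three[OF d] by (intro ext) simp
  consider "t = transpose h k" | "t = transpose h (2 * n - h)" | "t = transpose k (2 * n - h)"
    using assms by blast
  then show ?thesis
  proof cases
    case 1
    then have "t \<circ> cycle_of_list [2 * n - h, h, k] = transpose k (2 * n - h)"
      unfolding cyc using d by (auto simp: fun_eq_iff)
    then show ?thesis by (rule that[of k "2 * n - h", rotated 2]) (use d in auto)
  next
    case 2
    then have "t \<circ> cycle_of_list [2 * n - h, h, k] = transpose h k"
      unfolding cyc using d by (auto simp: fun_eq_iff)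
    then show ?thesis by (rule that[of h k, rotated 2]) (use d in auto)
  next
    case 3
    then have "t \<circ> cycle_of_list [2 * n - h, h, k] = transpose h (2 * n - h)"
      unfolding cyc using d by (auto simp: fun_eq_iff)
    then show ?thesis by (rule that[of h "2 * n - h", rotated 2]) (use d in auto)
  qed
qed

lemma prod_disj_transp_rho_hk_comp:
  assumes "t \<in> cycle_transpositions"
  shows "prod_disj_transp {1..2 * n} (n - 2) (t \<circ> rho_hk n h k)"
proof -
  obtain e1 e2 where e: "e1 \<noteq> e2" "{e1, e2} \<subseteq> {h, k, 2 * n - h}"
    "t \<circ> cycle_of_list [2 * n - h, h, k] = transpose e1 e2"
    using cycle_transposition_comp_cycle[OF assms] .
  let ?ps = "rho_pairs n h k @ [(e1, e2)]"
  have "distinct (pair_entries ?ps)"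
    using distinct_rho_pairs set_rho_pairs e(1,2) by auto
  moreover have "length ?ps = n - 2" using length_rho_pairs block_bounds n_eq by simp
  moreover have "set (pair_entries ?ps) \<subseteq> {1..2 * n}"
    using set_rho_pairs e(2) block_bounds by fastforce
  moreover have "lr_prod (transps ?ps) = t \<circ> rho_hk n h k"
  proof -
    have "lr_prod (transps ?ps) = transpose e1 e2 \<circ> lr_prod (transps (rho_pairs n h k))"
      by (simp add: lr_prod_append)
    also have "\<dots> = t \<circ> rho_hk n h k"
      unfolding rho_hk_eq_pairs e(3)[symmetric] by (simp add: comp_assoc)
    finally show ?thesis .
  qed
  ultimately show ?thesis unfolding prod_disj_transp_def by metis
qed

lemma cycle_transposition_props:
  assumes "t \<in> cycle_transpositions"
  shows "is_transposition {1..2 * n} t" "t (2 * n) = 2 * n" "t (t x) = x"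
proof -
  have C: "h \<in> {1..2 * n}" "k \<in> {1..2 * n}" "2 * n - h \<in> {1..2 * n}"
    "h \<noteq> k" "h \<noteq> 2 * n - h" "k \<noteq> 2 * n - h" "2 * n \<notin> {h, k, 2 * n - h}"
    using block_bounds by auto
  show "is_transposition {1..2 * n} t" using assms C unfolding is_transposition_def by blast
  show "t (2 * n) = 2 * n" using assms C by (auto simp: transpose_def)
  show "t (t x) = x" using assms by auto
qed

lemma special_of_cycle_transposition:
  assumes "t \<in> cycle_transpositions"
  shows "special n (sigma0_hk n h k) (sigma_inf n) (lr_prod [rho_hk n h k, t]) t"
proof -
  note t = cycle_transposition_props[OF assms]
  have "lr_prod [sigma0_hk n h k, sigma_inf n, lr_prod [rho_hk n h k, t], t] = id"
    using rho_hk_sigma_inf prod_disj_transp_involution[OF prod_disj_transp_sigma0_hk] t(3)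
    by (simp add: fun_eq_iff)
  moreover have "lr_prod [rho_hk n h k, t] (2 * n) = 2 * n"
    using rho_hk_top t(2) by simp
  ultimately show ?thesis
    unfolding special_def admissible_def
    using prod_disj_transp_sigma0_hk full_cycle_sigma_inf prod_disj_transp_rho_hk_comp[OF assms] t(1,2)
    by simp
qed

lemma cycle_transposition_of_conjugation:
  assumes t: "t = transpose u v" "u \<noteq> v"
    and conj: "\<And>x. rho_hk n h k (t (rho_hk n h k x)) = t x"
  shows "t \<in> cycle_transpositions"
proof -
  \<comment> \<open>If \<open>t\<close> fixed a cycle point \<open>x\<close> and \<open>\<rho> x\<close>, conjugation would give \<open>\<rho> (\<rho> x) = x\<close>.\<close>
  have hit: "x \<in> {u, v} \<or> rho_hk n h k x \<in> {u, v}" if "x \<in> {h, k, 2 * n - h}" for x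
  proof (rule ccontr)
    assume "\<not> (x \<in> {u, v} \<or> rho_hk n h k x \<in> {u, v})"
    then have "rho_hk n h k (rho_hk n h k x) = x" using conj[of x] t(1) by simp
    then show False using that rho_hk_on_cycle cycle_distinct by auto
  qed
  have eq: "transpose u v = transpose x y" if "x \<in> {u, v}" "y \<in> {u, v}" "x \<noteq> y" for x y
    using that by (auto simp: transpose_commute)
  from hit[of h] hit[of k] hit[of "2 * n - h"] rho_hk_on_cycle
  consider "h \<in> {u, v}" "k \<in> {u, v}" | "h \<in> {u, v}" "2 * n - h \<in> {u, v}"
    | "k \<in> {u, v}" "2 * n - h \<in> {u, v}"
    by auto
  then show ?thesis using eq cycle_distinct unfolding t(1) by cases auto
qed

lemma special_tuples_eq:
  "{(s0, sinf, s1, t). special n s0 sinf s1 t \<and> s0 = sigma0_hk n h k \<and> lr_prod [s1, t] = rho_hk n h k}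
     = (\<lambda>t. (sigma0_hk n h k, sigma_inf n, lr_prod [rho_hk n h k, t], t)) ` cycle_transpositions"
  (is "?S = ?f ` _")
proof (intro equalityI subsetI)
  fix X assume "X \<in> ?S"
  then obtain sinf s1 t where X: "X = (sigma0_hk n h k, sinf, s1, t)"
    "special n (sigma0_hk n h k) sinf s1 t" "lr_prod [s1, t] = rho_hk n h k"
    by blast
  then obtain u v where uv: "t = transpose u v" "u \<noteq> v" and s1: "prod_disj_transp {1..2 * n} (n - 2) s1"
    unfolding special_def admissible_def is_transposition_def by blast
  have "s1 x = lr_prod [rho_hk n h k, t] x" for x
    using arg_cong[OF fun_cong[OF X(3), of x], of t] uv(1) by simp
  then have s1_eq: "s1 = lr_prod [rho_hk n h k, t]" ..
  have "rho_hk n h k (t (rho_hk n h k x)) = t x" for x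
    using arg_cong[OF prod_disj_transp_involution[OF s1, of x], of t] s1_eq uv(1) by simp
  then have "t \<in> cycle_transpositions" by (rule cycle_transposition_of_conjugation[OF uv])
  with s1_eq show "X \<in> ?f ` cycle_transpositions"
    using X(1,2) unfolding special_def by auto
next
  fix X assume "X \<in> ?f ` cycle_transpositions"
  then show "X \<in> ?S"
    using special_of_cycle_transposition cycle_transposition_props(3) by (auto simp: fun_eq_iff)
qed

lemma card_special_tuples:
  "card ((\<lambda>t. (sigma0_hk n h k, sigma_inf n, lr_prod [rho_hk n h k, t], t)) ` cycle_transpositions) = 3"
proof -
  have "transpose h k h \<noteq> transpose h (2 * n - h) h" "transpose h k h \<noteq> transpose k (2 * n - h) h"
    "transpose h (2 * n - h) h \<noteq> transpose k (2 * n - h) h"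
    using cycle_distinct by auto
  then have "distinct [transpose h k, transpose h (2 * n - h), transpose k (2 * n - h)]"
    by (simp only: distinct_length_2_or_more distinct_singleton) metis
  from distinct_card[OF this] have "card cycle_transpositions = 3" by simp
  have "inj_on (\<lambda>t. (sigma0_hk n h k, sigma_inf n, lr_prod [rho_hk n h k, t], t)) cycle_transpositions"
    by (rule inj_onI) simp
  from card_image[OF this] \<open>card cycle_transpositions = 3\<close> show ?thesis by (rule trans)
qed

end

lemma good_hk_iff_hk_params: "good_hk n h k \<longleftrightarrow> (\<exists>p q. hk_params n h k p q)"
proof
  assume g: "good_hk n h k"
  then have "even (k - h)" unfolding good_hk_def by blast
  then obtain p where "k - h = 2 * p" by (rule evenE)
  with g show "\<exists>p q. hk_params n h k p q"
    by (intro exI[of _ p] exI[of _ "n - h - p"]) (auto simp: hk_params_def good_hk_def)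
qed (auto simp: hk_params_def good_hk_def)

lemma special_rho_sigma_inf:
  assumes "special n s0 sinf s1 t"
  shows "lr_prod [s1, t] (sigma_inf n y) = s0 y"
proof -
  from assms have prod: "lr_prod [s0, sinf, s1, t] = id" and sinf: "sinf = sigma_inf n"
    and s0: "prod_disj_transp {1..2 * n} n s0"
    unfolding special_def admissible_def by blast+
  have "t (s1 (sinf (s0 (s0 y)))) = s0 y" using fun_cong[OF prod, of "s0 y"] by simp
  then show ?thesis using sinf prod_disj_transp_involution[OF s0, of y] by simp
qed

lemma special_shifted_matching:
  assumes sp: "special n s0 sinf s1 t"
    and c3: "prod_disj_transp_3cycle {1..2 * n} (n - 3) (lr_prod [s1, t])"
  obtains a b c where "shifted_matching n s0 (lr_prod [s1, t]) a b c"
proof -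
  let ?\<rho> = "lr_prod [s1, t]"
  obtain a b c where abc: "distinct [a, b, c]" "{a, b, c} \<subseteq> {1..2 * n}"
    "?\<rho> a = b" "?\<rho> b = c" "?\<rho> c = a" "\<And>x. x \<notin> {a, b, c} \<Longrightarrow> ?\<rho> (?\<rho> x) = x"
    using prod_disj_transp_3cycle_elim[OF c3] by blast
  from sp have s0: "prod_disj_transp {1..2 * n} n s0" and "s1 (2 * n) = 2 * n" "t (2 * n) = 2 * n"
    unfolding special_def admissible_def by blast+
  then have top: "?\<rho> (2 * n) = 2 * n" by simp
  have "1 \<le> n" using abc(2) by auto
  then have one: "s0 1 = 2 * n"
    using special_rho_sigma_inf[OF sp, of 1] sigma_inf_in[of 1 n] top by simp
  have shift: "?\<rho> x = s0 (Suc x)" if "1 \<le> x" "x < 2 * n" for x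
    using special_rho_sigma_inf[OF sp, of "Suc x"] sigma_inf_in[of "Suc x" n] that by simp
  have matching: "s0 x \<in> {1..2 * n} \<and> s0 x \<noteq> x \<and> s0 (s0 x) = x" if "x \<in> {1..2 * n}" for x
    using prod_disj_transp_fixed_point_free(1)[OF s0 _ _ that] prod_disj_transp_involution[OF s0]
    by simp
  show ?thesis
    by (rule that, unfold_locales) (fact matching shift top one abc)+
qed

lemma special_three_cycle_classification:
  assumes sp: "special n s0 sinf s1 t"
    and c3: "prod_disj_transp_3cycle {1..2 * n} (n - 3) (lr_prod [s1, t])"
  obtains h k p q where "hk_params n h k p q" "s0 = sigma0_hk n h k" "lr_prod [s1, t] = rho_hk n h k"
proof -
  obtain a b c where "shifted_matching n s0 (lr_prod [s1, t]) a b c"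
    using special_shifted_matching[OF assms] .
  then obtain h k where "good_hk n h k" and s0: "\<forall>x\<in>{1..2 * n}. s0 x = sigma0_explicit n h k x"
    using shifted_matching.exists_good_hk by blast
  then obtain p q where hk: "hk_params n h k p q" using good_hk_iff_hk_params by blast
  have "s0 x = sigma0_explicit n h k x" for x
    using s0 prod_disj_transp_fixed_point_free(2)[of "{1..2 * n}" n s0 x] sp
    by (cases "x \<in> {1..2 * n}") (auto simp: sigma0_explicit_def special_def admissible_def)
  then have s0_eq: "s0 = sigma0_hk n h k"
    using hk_params.sigma0_hk_explicit[OF hk] by auto
  have "lr_prod [s1, t] (sigma_inf n z) = rho_hk n h k (sigma_inf n z)" for z
    using special_rho_sigma_inf[OF sp] hk_params.rho_hk_sigma_inf[OF hk] s0_eq by simp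
  then have "lr_prod [s1, t] = rho_hk n h k"
    using surj_sigma_inf by (metis surjD ext)
  with hk s0_eq show ?thesis by (rule that)
qed

theorem mainTheorem14:
  fixes n :: nat
  shows
  "(\<forall>s0 sinf s1 t.
      special n s0 sinf s1 t \<and> prod_disj_transp_3cycle {1..2*n} (n - 3) (lr_prod [s1, t]) \<longrightarrow>
      (\<exists>h k. good_hk n h k \<and> s0 = sigma0_hk n h k \<and> lr_prod [s1, t] = rho_hk n h k
         \<and> {x \<in> {1..2*n}. lr_prod [s1, t] x = x} = {2*n, (k+h) div 2, (2*n-h+k) div 2}))
   \<and>
   (\<forall>h k. good_hk n h k \<longrightarrow>
      {(s0, sinf, s1, t). special n s0 sinf s1 t \<and> s0 = sigma0_hk n h k \<and> lr_prod [s1, t] = rho_hk n h k}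
        = (\<lambda>t. (sigma0_hk n h k, sigma_inf n, lr_prod [rho_hk n h k, t], t))
            ` {transpose h k, transpose h (2*n-h), transpose k (2*n-h)}
      \<and> card {(s0, sinf, s1, t). special n s0 sinf s1 t \<and> s0 = sigma0_hk n h k
                                \<and> lr_prod [s1, t] = rho_hk n h k} = 3)"
proof (intro conjI allI impI)
  fix s0 sinf s1 t
  assume "special n s0 sinf s1 t \<and> prod_disj_transp_3cycle {1..2*n} (n - 3) (lr_prod [s1, t])"
  then obtain h k p q where hk: "hk_params n h k p q"
    and "s0 = sigma0_hk n h k" "lr_prod [s1, t] = rho_hk n h k"
    using special_three_cycle_classification by metis
  with hk_params.rho_hk_fixed_points[OF hk] good_hk_iff_hk_params
  show "\<exists>h k. good_hk n h k \<and> s0 = sigma0_hk n h k \<and> lr_prod [s1, t] = rho_hk n h k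
         \<and> {x \<in> {1..2*n}. lr_prod [s1, t] x = x} = {2*n, (k+h) div 2, (2*n-h+k) div 2}"
    by auto
next
  fix h k assume "good_hk n h k"
  then obtain p q where hk: "hk_params n h k p q" using good_hk_iff_hk_params by blast
  show "{(s0, sinf, s1, t). special n s0 sinf s1 t \<and> s0 = sigma0_hk n h k \<and> lr_prod [s1, t] = rho_hk n h k}
        = (\<lambda>t. (sigma0_hk n h k, sigma_inf n, lr_prod [rho_hk n h k, t], t))
            ` {transpose h k, transpose h (2*n-h), transpose k (2*n-h)}"
    by (rule hk_params.special_tuples_eq[OF hk])
  then show "card {(s0, sinf, s1, t). special n s0 sinf s1 t \<and> s0 = sigma0_hk n h k
                                \<and> lr_prod [s1, t] = rho_hk n h k} = 3"
    using hk_params.card_special_tuples[OF hk] by simp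
qed

end
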